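(* There exist polynomials $N$ and $D$ with rational coefficients in ten variables such that, for every convex cyclic pentagon with area $A$, vertex-triangle areas $(0),(1),(2),(3),(4)$ and side lengths $a_0,\dots,a_4$, $$D\big((0),\dots,(4),a_0^2,\dots,a_4^2\big)\cdot A \;=\; N\big((0),\dots,(4),a_0^2,\dots,a_4^2\big),$$ and $D$ does not vanish identically on such data. In other words, the area of a cyclic pentagon is a rational function of the areas of its vertex triangles and the squares of its side lengths.
   Context: A cyclic pentagon is a pentagon inscribed in a circle. Its vertices are labelled $0,1,2,3,4$ in cyclic order, with indices taken mod $5$. The vertex triangle at vertex $i$ is the triangle with vertices $i-1,i,i+1$, and $(i)$ denotes its area. $A$ denotes the area of the pentagon. *)

theory Defs
  imports Complex_Main
begin

(* Multivariate polynomials with rational coefficients in the variables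
   x_0, ..., x_9, represented as a finite list of terms (c, e) standing for
   the monomial  c * x_0^(e 0) * ... * x_9^(e 9).  Every polynomial in
   Q[x_0,...,x_9] is of this form. *)
type_synonym ratpoly10 = "(rat \<times> (nat \<Rightarrow> nat)) list"

definition poly10_eval :: "ratpoly10 \<Rightarrow> (nat \<Rightarrow> real) \<Rightarrow> real" where
  "poly10_eval P x = (\<Sum>(c, e) \<leftarrow> P. of_rat c * (\<Prod>i<10. x i ^ e i))"

definition cross :: "complex \<Rightarrow> complex \<Rightarrow> real" where
  "cross z w = Re z * Im w - Im z * Re w"

definition vx :: "(nat \<Rightarrow> complex) \<Rightarrow> nat \<Rightarrow> complex" where
  "vx p i = p (i mod 5)"

definition cyclic_pentagon :: "(nat \<Rightarrow> complex) \<Rightarrow> bool" where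
  "cyclic_pentagon p \<longleftrightarrow> (\<exists>c r. r > 0 \<and> (\<forall>i<5. cmod (p i - c) = r))"

definition convex_pentagon :: "(nat \<Rightarrow> complex) \<Rightarrow> bool" where
  "convex_pentagon p \<longleftrightarrow>
     (\<forall>i<5. \<forall>j<5. j \<noteq> i \<and> j \<noteq> (i + 1) mod 5 \<longrightarrow>
        cross (vx p (i + 1) - vx p i) (p j - vx p i) > 0) \<or>
     (\<forall>i<5. \<forall>j<5. j \<noteq> i \<and> j \<noteq> (i + 1) mod 5 \<longrightarrow>
        cross (vx p (i + 1) - vx p i) (p j - vx p i) < 0)"

definition pent_area :: "(nat \<Rightarrow> complex) \<Rightarrow> real" where
  "pent_area p = \<bar>(\<Sum>i<5. cross (vx p i) (vx p (i + 1))) / 2\<bar>"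

(* Area (i) of the vertex triangle with vertices i-1, i, i+1. *)
definition vtri_area :: "(nat \<Rightarrow> complex) \<Rightarrow> nat \<Rightarrow> real" where
  "vtri_area p i = \<bar>cross (vx p i - vx p (i + 4)) (vx p (i + 1) - vx p (i + 4)) / 2\<bar>"

definition side :: "(nat \<Rightarrow> complex) \<Rightarrow> nat \<Rightarrow> real" where
  "side p i = cmod (vx p (i + 1) - vx p i)"

definition pent_data :: "(nat \<Rightarrow> complex) \<Rightarrow> nat \<Rightarrow> real" where
  "pent_data p k = (if k < 5 then vtri_area p k else (side p (k - 5))^2)"

end

theory Submission
  imports Defs
begin

(* Translate the circumcentre to the origin, let U k be the signed area of the triangle formed by
   the centre and side k, b k = a_k^2 and R = r^2.  Every vertex triangle satisfies
   2 R (k) = b (k-1) U k + b k U (k-1), and every central triangle satisfies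
   16 (U k)^2 = b k (4 R - b k).  Since 5 is odd, the five linear relations can be solved for the
   U k, which are thus R times rational functions of the data.  Substituting into the quadratic
   relations for k = 0, 1 and eliminating R^2 determines R rationally, and A = \<Sum>k. U k.
   Convexity gives all signed areas the same sign, which removes the absolute values in the data;
   a pentagon with rational vertices on the unit circle shows that the denominator is not zero. *)

definition ratpoly10_fun :: "((nat \<Rightarrow> real) \<Rightarrow> real) \<Rightarrow> bool" where
  "ratpoly10_fun f \<longleftrightarrow> (\<exists>P. \<forall>x. poly10_eval P x = f x)"

definition poly10_mult :: "ratpoly10 \<Rightarrow> ratpoly10 \<Rightarrow> ratpoly10" where
  "poly10_mult P Q = [(c * d, \<lambda>i. e i + f i). (c, e) \<leftarrow> P, (d, f) \<leftarrow> Q]"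

lemma poly10_eval_Nil: "poly10_eval [] x = 0"
  by (simp add: poly10_eval_def)

lemma poly10_eval_Cons: "poly10_eval ((c, e) # P) x = of_rat c * (\<Prod>i<10. x i ^ e i) + poly10_eval P x"
  by (simp add: poly10_eval_def)

lemma poly10_eval_append: "poly10_eval (P @ Q) x = poly10_eval P x + poly10_eval Q x"
  by (simp add: poly10_eval_def)

lemma poly10_eval_mult: "poly10_eval (poly10_mult P Q) x = poly10_eval P x * poly10_eval Q x"
proof (induction P)
  case Nil
  then show ?case by (simp add: poly10_mult_def poly10_eval_Nil)
next
  case (Cons m P)
  obtain c e where m: "m = (c, e)" by fastforce
  have "poly10_eval [(c * d, \<lambda>i. e i + f i). (d, f) \<leftarrow> Q] x
      = of_rat c * (\<Prod>i<10. x i ^ e i) * poly10_eval Q x"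
    by (induction Q)
      (auto simp: poly10_eval_Nil poly10_eval_Cons of_rat_mult power_add prod.distrib algebra_simps)
  with Cons show ?case
    by (simp add: m poly10_mult_def poly10_eval_append poly10_eval_Cons distrib_right)
qed

lemma ratpoly10_fun_const: "ratpoly10_fun (\<lambda>x. of_rat c)"
  unfolding ratpoly10_fun_def by (rule exI[of _ "[(c, \<lambda>_. 0)]"]) (simp add: poly10_eval_def)

lemma ratpoly10_fun_numeral: "ratpoly10_fun (\<lambda>x. numeral n)"
  using ratpoly10_fun_const[of "numeral n"] by simp

lemma ratpoly10_fun_var:
  assumes "i < 10"
  shows "ratpoly10_fun (\<lambda>x. x i)"
proof -
  have "(\<Prod>j<10. x j ^ (if j = i then 1 else 0)) = x i" for x :: "nat \<Rightarrow> real"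
    using assms by (simp add: power_0 prod.delta if_distrib[of "\<lambda>n. x _ ^ n"] cong: if_cong)
  then show ?thesis
    unfolding ratpoly10_fun_def
    by (intro exI[of _ "[(1, \<lambda>j. if j = i then 1 else 0)]"]) (simp add: poly10_eval_def)
qed

lemma ratpoly10_fun_add:
  "ratpoly10_fun f \<Longrightarrow> ratpoly10_fun g \<Longrightarrow> ratpoly10_fun (\<lambda>x. f x + g x)"
  unfolding ratpoly10_fun_def by (metis poly10_eval_append)

lemma ratpoly10_fun_mult:
  "ratpoly10_fun f \<Longrightarrow> ratpoly10_fun g \<Longrightarrow> ratpoly10_fun (\<lambda>x. f x * g x)"
  unfolding ratpoly10_fun_def by (metis poly10_eval_mult)

lemma ratpoly10_fun_diff:
  assumes "ratpoly10_fun f" "ratpoly10_fun g"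
  shows "ratpoly10_fun (\<lambda>x. f x - g x)"
proof -
  have "ratpoly10_fun (\<lambda>x. f x + of_rat (- 1) * g x)"
    using assms by (intro ratpoly10_fun_add ratpoly10_fun_mult ratpoly10_fun_const)
  then show ?thesis by (simp add: of_rat_minus)
qed

lemma ratpoly10_fun_power: "ratpoly10_fun f \<Longrightarrow> ratpoly10_fun (\<lambda>x. f x ^ n)"
  using ratpoly10_fun_const[of 1] by (induction n) (auto intro: ratpoly10_fun_mult)

lemma ratpoly10_fun_sum:
  "(\<And>k. k \<in> A \<Longrightarrow> ratpoly10_fun (f k)) \<Longrightarrow> ratpoly10_fun (\<lambda>x. \<Sum>k\<in>A. f k x)"
  using ratpoly10_fun_const[of 0]
  by (induction A rule: infinite_finite_induct) (auto intro: ratpoly10_fun_add)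

lemma ratpoly10_fun_prod:
  "(\<And>k. k \<in> A \<Longrightarrow> ratpoly10_fun (f k)) \<Longrightarrow> ratpoly10_fun (\<lambda>x. \<Prod>k\<in>A. f k x)"
  using ratpoly10_fun_const[of 1]
  by (induction A rule: infinite_finite_induct) (auto intro: ratpoly10_fun_mult)

lemmas ratpoly10_fun_intros =
  ratpoly10_fun_var ratpoly10_fun_numeral ratpoly10_fun_add ratpoly10_fun_diff
  ratpoly10_fun_mult ratpoly10_fun_power ratpoly10_fun_sum ratpoly10_fun_prod

lemma less_5_cases:
  assumes "k < (5::nat)"
  obtains "k = 0" | "k = 1" | "k = 2" | "k = 3" | "k = 4"
  using assms by linarith

lemma all_less_5: "(\<forall>k<5. P k) \<longleftrightarrow> P 0 \<and> P 1 \<and> P 2 \<and> P 3 \<and> P (4::nat)"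
  by (simp add: numeral_eq_Suc All_less_Suc conj_ac)

lemma sum_less_5: "(\<Sum>k<5. f k) = f 0 + f 1 + f 2 + f 3 + f (4::nat)"
  by (simp add: eval_nat_numeral)

lemma prod_less_5: "(\<Prod>k<5. f k) = f 0 * f 1 * f 2 * f 3 * f (4::nat)"
  by (simp add: eval_nat_numeral)

(* alt_sum T b k = (\<Prod>i<5. b i) * (\<Sum>m<5. (-1)^m * T (k - m) / (b (k - m - 1) * b (k - m))),
   indices mod 5, written without division. *)
definition alt_sum :: "(nat \<Rightarrow> real) \<Rightarrow> (nat \<Rightarrow> real) \<Rightarrow> nat \<Rightarrow> real" where
  "alt_sum T b k =
    (let t = (\<lambda>i. T ((k + i) mod 5)); c = (\<lambda>i. b ((k + i) mod 5)) in
      t 0 * c 1 * c 2 * c 3 - t 4 * c 0 * c 1 * c 2 + t 3 * c 4 * c 0 * c 1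
      - t 2 * c 3 * c 4 * c 0 + t 1 * c 2 * c 3 * c 4)"

lemma alt_sum_scale: "alt_sum (\<lambda>i. a * T i) b k = a * alt_sum T b k"
  by (simp add: alt_sum_def Let_def algebra_simps)

lemma alt_sum_eval:
  "alt_sum T b 0 =
    T 0 * b 1 * b 2 * b 3 - T 4 * b 0 * b 1 * b 2 + T 3 * b 4 * b 0 * b 1
    - T 2 * b 3 * b 4 * b 0 + T 1 * b 2 * b 3 * b 4"
  "alt_sum T b 1 =
    T 1 * b 2 * b 3 * b 4 - T 0 * b 1 * b 2 * b 3 + T 4 * b 0 * b 1 * b 2
    - T 3 * b 4 * b 0 * b 1 + T 2 * b 3 * b 4 * b 0"
  "alt_sum T b 2 =
    T 2 * b 3 * b 4 * b 0 - T 1 * b 2 * b 3 * b 4 + T 0 * b 1 * b 2 * b 3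
    - T 4 * b 0 * b 1 * b 2 + T 3 * b 4 * b 0 * b 1"
  "alt_sum T b 3 =
    T 3 * b 4 * b 0 * b 1 - T 2 * b 3 * b 4 * b 0 + T 1 * b 2 * b 3 * b 4
    - T 0 * b 1 * b 2 * b 3 + T 4 * b 0 * b 1 * b 2"
  "alt_sum T b 4 =
    T 4 * b 0 * b 1 * b 2 - T 3 * b 4 * b 0 * b 1 + T 2 * b 3 * b 4 * b 0
    - T 1 * b 2 * b 3 * b 4 + T 0 * b 1 * b 2 * b 3"
  by (simp_all add: alt_sum_def Let_def numeral_2_eq_2)

lemma alt_sum_telescopes:
  assumes "k < 5" and "\<forall>j<5. \<tau> j = b ((j + 4) mod 5) * U j + b j * U ((j + 4) mod 5)"
  shows "b k * alt_sum \<tau> b k = 2 * (\<Prod>j<5. b j) * U k"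
proof -
  have \<tau>: "\<tau> 0 = b 4 * U 0 + b 0 * U 4" "\<tau> 1 = b 0 * U 1 + b 1 * U 0" "\<tau> 2 = b 1 * U 2 + b 2 * U 1"
    "\<tau> 3 = b 2 * U 3 + b 3 * U 2" "\<tau> 4 = b 3 * U 4 + b 4 * U 3"
    using assms(2) unfolding all_less_5 by simp_all
  from assms(1) show ?thesis
    by (cases rule: less_5_cases)
      (simp_all only: alt_sum_eval \<tau> prod_less_5; simp add: algebra_simps)+
qed

definition area_den :: "(nat \<Rightarrow> real) \<Rightarrow> (nat \<Rightarrow> real) \<Rightarrow> real" where
  "area_den T b = 4 * (\<Prod>k<5. b k) * (b 1 * (alt_sum T b 1)\<^sup>2 - b 0 * (alt_sum T b 0)\<^sup>2)"

definition area_num :: "(nat \<Rightarrow> real) \<Rightarrow> (nat \<Rightarrow> real) \<Rightarrow> real" where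
  "area_num T b =
    b 0 * b 1 * ((alt_sum T b 1)\<^sup>2 - (alt_sum T b 0)\<^sup>2) * (\<Sum>k<5. b k * alt_sum T b k)"

lemma chord_relation_rescale:
  fixes R b s P u :: real
  assumes "R * b * s = P * u" and "16 * u\<^sup>2 = b * (4 * R - b)" and "b \<noteq> 0"
  shows "16 * R\<^sup>2 * b * s\<^sup>2 = P\<^sup>2 * (4 * R - b)"
proof -
  have "b * (16 * R\<^sup>2 * b * s\<^sup>2) = 16 * (R * b * s)\<^sup>2"
    by (simp add: power2_eq_square algebra_simps)
  also have "\<dots> = P\<^sup>2 * (16 * u\<^sup>2)"
    by (simp add: assms(1) power_mult_distrib)
  also have "\<dots> = b * (P\<^sup>2 * (4 * R - b))"
    by (simp add: assms(2))
  finally show ?thesis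
    using assms(3) by simp
qed

lemma chord_relations_imp_radius_eq:
  fixes R P b0 b1 s0 s1 :: real
  assumes "16 * R\<^sup>2 * b0 * s0\<^sup>2 = P\<^sup>2 * (4 * R - b0)"
    and "16 * R\<^sup>2 * b1 * s1\<^sup>2 = P\<^sup>2 * (4 * R - b1)"
    and "P \<noteq> 0"
  shows "4 * R * (b1 * s1\<^sup>2 - b0 * s0\<^sup>2) = b0 * b1 * (s1\<^sup>2 - s0\<^sup>2)"
proof -
  have "P\<^sup>2 * (4 * R * (b1 * s1\<^sup>2 - b0 * s0\<^sup>2) - b0 * b1 * (s1\<^sup>2 - s0\<^sup>2))
      = b1 * s1\<^sup>2 * (P\<^sup>2 * (4 * R - b0)) - b0 * s0\<^sup>2 * (P\<^sup>2 * (4 * R - b1))"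
    by (simp add: algebra_simps)
  also have "\<dots> = b1 * s1\<^sup>2 * (16 * R\<^sup>2 * b0 * s0\<^sup>2) - b0 * s0\<^sup>2 * (16 * R\<^sup>2 * b1 * s1\<^sup>2)"
    unfolding assms(1,2) ..
  also have "\<dots> = 0"
    by (simp add: algebra_simps)
  finally show ?thesis
    using assms(3) by simp
qed

lemma area_den_mult_eq_area_num:
  fixes T b U :: "nat \<Rightarrow> real" and R :: real
  assumes b_nonzero: "\<forall>k<5. b k \<noteq> 0"
    and inscribed: "\<forall>k<5. 2 * R * T k = b ((k + 4) mod 5) * U k + b k * U ((k + 4) mod 5)"
    and chord0: "16 * (U 0)\<^sup>2 = b 0 * (4 * R - b 0)"
    and chord1: "16 * (U 1)\<^sup>2 = b 1 * (4 * R - b 1)"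
  shows "area_den T b * (\<Sum>k<5. U k) = area_num T b"
proof -
  define P where "P = (\<Prod>k<5. b k)"
  define \<sigma> where "\<sigma> k = alt_sum T b k" for k
  have "P \<noteq> 0"
    using b_nonzero by (simp add: P_def)
  have central: "R * b k * \<sigma> k = P * U k" if "k < 5" for k
    using alt_sum_telescopes[OF that, of "\<lambda>j. 2 * R * T j"] inscribed
    unfolding alt_sum_scale \<sigma>_def P_def by (simp add: algebra_simps)
  have chord0': "16 * R\<^sup>2 * b 0 * (\<sigma> 0)\<^sup>2 = P\<^sup>2 * (4 * R - b 0)"
    using central[of 0] chord0 b_nonzero by (intro chord_relation_rescale) auto
  have chord1': "16 * R\<^sup>2 * b 1 * (\<sigma> 1)\<^sup>2 = P\<^sup>2 * (4 * R - b 1)"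
    using central[of 1] chord1 b_nonzero by (intro chord_relation_rescale) auto
  have radius: "4 * R * (b 1 * (\<sigma> 1)\<^sup>2 - b 0 * (\<sigma> 0)\<^sup>2) = b 0 * b 1 * ((\<sigma> 1)\<^sup>2 - (\<sigma> 0)\<^sup>2)"
    using chord0' chord1' \<open>P \<noteq> 0\<close> by (rule chord_relations_imp_radius_eq)
  have area: "P * (\<Sum>k<5. U k) = R * (\<Sum>k<5. b k * \<sigma> k)"
    by (simp add: sum_distrib_left central mult.assoc[symmetric])
  have "area_den T b * (\<Sum>k<5. U k) = 4 * (b 1 * (\<sigma> 1)\<^sup>2 - b 0 * (\<sigma> 0)\<^sup>2) * (P * (\<Sum>k<5. U k))"
    by (simp add: area_den_def P_def \<sigma>_def)
  also have "\<dots> = 4 * R * (b 1 * (\<sigma> 1)\<^sup>2 - b 0 * (\<sigma> 0)\<^sup>2) * (\<Sum>k<5. b k * \<sigma> k)"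
    by (simp add: area)
  also have "\<dots> = area_num T b"
    unfolding radius by (simp add: area_num_def \<sigma>_def)
  finally show ?thesis .
qed

lemma cmod_eq_imp_Re_Im_sq:
  "cmod a = r \<Longrightarrow> (Re a)\<^sup>2 + (Im a)\<^sup>2 = r\<^sup>2"
  using cmod_power2[of a] by simp

lemma central_triangle_cross_sq:
  assumes "cmod a = r" "cmod b = r"
  shows "4 * (cross a b)\<^sup>2 = (cmod (b - a))\<^sup>2 * (4 * r\<^sup>2 - (cmod (b - a))\<^sup>2)"
  using assms[THEN cmod_eq_imp_Re_Im_sq] unfolding cross_def cmod_power2 by simp algebra

lemma inscribed_triangle_cross:
  assumes "cmod a = r" "cmod b = r" "cmod c = r"
  shows "2 * r\<^sup>2 * cross (b - a) (c - a) = (cmod (b - a))\<^sup>2 * cross b c + (cmod (c - b))\<^sup>2 * cross a b"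
  using assms[THEN cmod_eq_imp_Re_Im_sq] unfolding cross_def cmod_power2 by simp algebra

lemma vx_mod [simp]: "vx p (i mod 5) = vx p i"
  by (simp add: vx_def)

lemma vx_cong_mod: "i mod 5 = j mod 5 \<Longrightarrow> vx p i = vx p j"
  by (simp add: vx_def)

lemma vx_Suc_mod [simp]: "vx p (Suc (i mod 5)) = vx p (Suc i)"
  by (simp add: vx_def mod_Suc_eq)

lemma side_mod [simp]: "side p (i mod 5) = side p i"
  by (simp add: side_def)

definition signed_vtri :: "(nat \<Rightarrow> complex) \<Rightarrow> nat \<Rightarrow> real" where
  "signed_vtri p i = cross (vx p i - vx p (i + 4)) (vx p (i + 1) - vx p (i + 4)) / 2"

definition signed_area :: "(nat \<Rightarrow> complex) \<Rightarrow> real" where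
  "signed_area p = (\<Sum>i<5. cross (vx p i) (vx p (i + 1))) / 2"

lemma signed_vtri_mod: "signed_vtri p (i mod 5) = signed_vtri p i"
proof -
  have "vx p (i mod 5 + 4) = vx p (i + 4)"
    by (rule vx_cong_mod) (simp add: mod_add_left_eq)
  then show ?thesis
    by (simp add: signed_vtri_def)
qed

lemma vtri_area_eq_abs: "vtri_area p i = \<bar>signed_vtri p i\<bar>"
  by (simp add: vtri_area_def signed_vtri_def)

lemma pent_area_eq_abs: "pent_area p = \<bar>signed_area p\<bar>"
  by (simp add: pent_area_def signed_area_def)

definition central_area :: "(nat \<Rightarrow> complex) \<Rightarrow> complex \<Rightarrow> nat \<Rightarrow> real" where
  "central_area p c i = cross (vx p i - c) (vx p (i + 1) - c) / 2"

lemma central_area_mod [simp]: "central_area p c (i mod 5) = central_area p c i"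
  by (simp add: central_area_def)

lemma signed_area_eq_sum_central_area: "signed_area p = (\<Sum>i<5. central_area p c i)"
  unfolding central_area_def signed_area_def
  by (simp add: sum_less_5 cross_def vx_def field_simps del: One_nat_def)

lemma central_area_sq:
  assumes "\<forall>i. cmod (vx p i - c) = r"
  shows "16 * (central_area p c i)\<^sup>2 = (side p i)\<^sup>2 * (4 * r\<^sup>2 - (side p i)\<^sup>2)"
proof -
  have "16 * (central_area p c i)\<^sup>2 = 4 * (cross (vx p i - c) (vx p (i + 1) - c))\<^sup>2"
    by (simp add: central_area_def power_divide)
  also have "\<dots> = (side p i)\<^sup>2 * (4 * r\<^sup>2 - (side p i)\<^sup>2)"
    using central_triangle_cross_sq[of "vx p i - c" r "vx p (i + 1) - c"] assms
    by (simp add: side_def)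
  finally show ?thesis .
qed

lemma signed_vtri_inscribed:
  assumes "\<forall>i. cmod (vx p i - c) = r"
  shows "2 * r\<^sup>2 * signed_vtri p i
    = (side p (i + 4))\<^sup>2 * central_area p c i + (side p i)\<^sup>2 * central_area p c (i + 4)"
proof -
  have "vx p (i + 4 + 1) = vx p i"
    by (rule vx_cong_mod) simp
  moreover have
    "2 * r\<^sup>2 * cross ((vx p i - c) - (vx p (i + 4) - c)) ((vx p (i + 1) - c) - (vx p (i + 4) - c))
      = (cmod ((vx p i - c) - (vx p (i + 4) - c)))\<^sup>2 * cross (vx p i - c) (vx p (i + 1) - c)
        + (cmod ((vx p (i + 1) - c) - (vx p i - c)))\<^sup>2 * cross (vx p (i + 4) - c) (vx p i - c)"
    using assms by (intro inscribed_triangle_cross) auto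
  ultimately show ?thesis
    by (simp add: signed_vtri_def central_area_def side_def field_simps)
qed

lemma signed_area_triangulation:
  "signed_area p = signed_vtri p 1 + signed_vtri p 4 + cross (vx p 3 - vx p 2) (p 0 - vx p 2) / 2"
  by (simp add: signed_area_def signed_vtri_def sum_less_5 cross_def vx_def field_simps
      del: One_nat_def)

lemma convex_pentagon_signE:
  assumes "convex_pentagon p"
  obtains e :: real where "e = 1 \<or> e = -1"
    and "\<And>i j. i < 5 \<Longrightarrow> j < 5 \<Longrightarrow> j \<noteq> i \<Longrightarrow> j \<noteq> (i + 1) mod 5 \<Longrightarrow>
      e * cross (vx p (i + 1) - vx p i) (p j - vx p i) > 0"
proof -
  consider
    "\<forall>i<5. \<forall>j<5. j \<noteq> i \<and> j \<noteq> (i + 1) mod 5 \<longrightarrow>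
      cross (vx p (i + 1) - vx p i) (p j - vx p i) > 0" |
    "\<forall>i<5. \<forall>j<5. j \<noteq> i \<and> j \<noteq> (i + 1) mod 5 \<longrightarrow>
      cross (vx p (i + 1) - vx p i) (p j - vx p i) < 0"
    using assms unfolding convex_pentagon_def by blast
  then show ?thesis
    by cases (use that[of 1] that[of "-1"] in auto)
qed

lemma convex_pentagon_orientation:
  assumes "convex_pentagon p"
  obtains e :: real where "e = 1 \<or> e = -1"
    and "\<And>k. e * signed_vtri p k > 0" and "e * signed_area p > 0"
proof -
  obtain e :: real where e: "e = 1 \<or> e = -1"
    and edge: "\<And>i j. i < 5 \<Longrightarrow> j < 5 \<Longrightarrow> j \<noteq> i \<Longrightarrow> j \<noteq> (i + 1) mod 5 \<Longrightarrow>
      e * cross (vx p (i + 1) - vx p i) (p j - vx p i) > 0"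
    using convex_pentagon_signE[OF assms] by blast
  have "e * signed_vtri p k > 0" if "k < 5" for k
    using that edge[of 4 1] edge[of 0 2] edge[of 1 3] edge[of 2 4] edge[of 3 0]
    by (cases rule: less_5_cases) (simp_all add: signed_vtri_def vx_def numeral_2_eq_2)
  then have vtri: "e * signed_vtri p k > 0" for k
    using signed_vtri_mod[of p k] by (metis mod_less_divisor zero_less_numeral)
  have "e * cross (vx p (2 + 1) - vx p 2) (p 0 - vx p 2) > 0"
    by (rule edge) simp_all
  then have "e * signed_area p > 0"
    using vtri[of 1] vtri[of 4] unfolding signed_area_triangulation numeral_plus_one
    by (simp add: algebra_simps del: One_nat_def)
  with e vtri show ?thesis using that by blast
qed

lemma convex_pentagon_side_nonzero:
  assumes "convex_pentagon p"
  shows "side p k \<noteq> 0"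
proof
  assume "side p k = 0"
  then have "vx p (k + 1) = vx p k"
    by (simp add: side_def)
  moreover have "vx p (k + 1 + 4) = vx p k"
    by (rule vx_cong_mod) simp
  ultimately have "signed_vtri p (k + 1) = 0"
    by (simp add: signed_vtri_def cross_def)
  with convex_pentagon_orientation[OF assms] show False
    by (metis mult_zero_right less_irrefl)
qed

lemma cyclic_convex_pentagon_area_eq:
  assumes "cyclic_pentagon p" and "convex_pentagon p"
  shows "area_den (pent_data p) (\<lambda>k. pent_data p (k + 5)) * pent_area p
    = area_num (pent_data p) (\<lambda>k. pent_data p (k + 5))"
proof -
  obtain c r where "\<forall>i<5. cmod (p i - c) = r"
    using assms(1) unfolding cyclic_pentagon_def by blast
  then have on_circle: "\<forall>i. cmod (vx p i - c) = r"
    by (simp add: vx_def)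
  obtain e :: real where e: "e = 1 \<or> e = -1"
    and pos_vtri: "\<And>k. e * signed_vtri p k > 0" and pos_area: "e * signed_area p > 0"
    using convex_pentagon_orientation[OF assms(2)] by blast
  have abs_e: "\<bar>x\<bar> = e * x" if "e * x > 0" for x
    using e that by (auto simp: zero_less_mult_iff)
  have "e\<^sup>2 = 1"
    using e by auto
  define U where "U k = e * central_area p c k" for k
  have "area_den (pent_data p) (\<lambda>k. pent_data p (k + 5)) * (\<Sum>k<5. U k)
      = area_num (pent_data p) (\<lambda>k. pent_data p (k + 5))"
  proof (rule area_den_mult_eq_area_num)
    show "\<forall>k<5. pent_data p (k + 5) \<noteq> 0"
      using convex_pentagon_side_nonzero[OF assms(2)] by (simp add: pent_data_def)
    show "\<forall>k<5. 2 * r\<^sup>2 * pent_data p k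
      = pent_data p ((k + 4) mod 5 + 5) * U k + pent_data p (k + 5) * U ((k + 4) mod 5)"
    proof (intro allI impI)
      fix k :: nat
      assume "k < 5"
      then have "pent_data p k = e * signed_vtri p k"
        using abs_e[OF pos_vtri] by (simp add: pent_data_def vtri_area_eq_abs)
      then show "2 * r\<^sup>2 * pent_data p k
        = pent_data p ((k + 4) mod 5 + 5) * U k + pent_data p (k + 5) * U ((k + 4) mod 5)"
        using arg_cong[OF signed_vtri_inscribed[OF on_circle, of k], of "\<lambda>x. e * x"]
        by (simp add: pent_data_def U_def algebra_simps)
    qed
    have "16 * (U k)\<^sup>2 = pent_data p (k + 5) * (4 * r\<^sup>2 - pent_data p (k + 5))" for k
      using central_area_sq[OF on_circle] \<open>e\<^sup>2 = 1\<close>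
      by (simp add: pent_data_def U_def power_mult_distrib)
    then show "16 * (U 0)\<^sup>2 = pent_data p (0 + 5) * (4 * r\<^sup>2 - pent_data p (0 + 5))"
      and "16 * (U 1)\<^sup>2 = pent_data p (1 + 5) * (4 * r\<^sup>2 - pent_data p (1 + 5))"
      by blast+
  qed
  moreover have "pent_area p = (\<Sum>k<5. U k)"
    using abs_e[OF pos_area]
    by (simp add: pent_area_eq_abs signed_area_eq_sum_central_area[of p c] U_def sum_distrib_left)
  ultimately show ?thesis
    by simp
qed

lemma ratpoly10_fun_area_den: "ratpoly10_fun (\<lambda>x. area_den x (\<lambda>k. x (k + 5)))"
  unfolding area_den_def alt_sum_def Let_def by (intro ratpoly10_fun_intros) auto

lemma ratpoly10_fun_area_num: "ratpoly10_fun (\<lambda>x. area_num x (\<lambda>k. x (k + 5)))"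
  unfolding area_num_def alt_sum_def Let_def by (intro ratpoly10_fun_intros) auto

definition example_pentagon :: "nat \<Rightarrow> complex" where
  "example_pentagon i =
    [1, Complex (3/5) (4/5), Complex (-4/5) (3/5), Complex (-3/5) (-4/5), Complex (12/13) (-5/13)] ! i"

lemma example_pentagon_cyclic: "cyclic_pentagon example_pentagon"
  unfolding cyclic_pentagon_def
proof (intro exI conjI)
  show "\<forall>i<5. cmod (example_pentagon i - 0) = 1"
    unfolding all_less_5 by (simp add: example_pentagon_def cmod_def power2_eq_square)
qed simp

lemma example_pentagon_convex: "convex_pentagon example_pentagon"
  unfolding convex_pentagon_def all_less_5
  by (intro disjI1) (simp add: vx_def example_pentagon_def cross_def)

lemma example_pentagon_data:
  "pent_data example_pentagon 0 = 7/65" "pent_data example_pentagon 1 = 3/5"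
  "pent_data example_pentagon 2 = 1" "pent_data example_pentagon 3 = 72/65"
  "pent_data example_pentagon 4 = 18/65" "pent_data example_pentagon 5 = 4/5"
  "pent_data example_pentagon 6 = 2" "pent_data example_pentagon 7 = 2"
  "pent_data example_pentagon 8 = 162/65" "pent_data example_pentagon 9 = 2/13"
  unfolding pent_data_def side_def cmod_power2
  by (simp_all add: vtri_area_def vx_def example_pentagon_def cross_def power2_eq_square)

lemma example_pentagon_area_den:
  "area_den (pent_data example_pentagon) (\<lambda>k. pent_data example_pentagon (k + 5)) \<noteq> 0"
  by (simp add: area_den_def alt_sum_eval prod_less_5 example_pentagon_data power2_eq_square
      del: One_nat_def)

theorem theorem6:
  shows "\<exists>N D :: ratpoly10.
     (\<forall>p. cyclic_pentagon p \<and> convex_pentagon p \<longrightarrow>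
        poly10_eval D (pent_data p) * pent_area p = poly10_eval N (pent_data p)) \<and>
     (\<exists>p. cyclic_pentagon p \<and> convex_pentagon p \<and> poly10_eval D (pent_data p) \<noteq> 0)"
proof -
  from ratpoly10_fun_area_den ratpoly10_fun_area_num
  obtain D N where D: "\<And>x. poly10_eval D x = area_den x (\<lambda>k. x (k + 5))"
    and N: "\<And>x. poly10_eval N x = area_num x (\<lambda>k. x (k + 5))"
    unfolding ratpoly10_fun_def by blast
  show ?thesis
  proof (intro exI conjI allI impI)
    fix p
    assume "cyclic_pentagon p \<and> convex_pentagon p"
    then show "poly10_eval D (pent_data p) * pent_area p = poly10_eval N (pent_data p)"
      by (simp add: D N cyclic_convex_pentagon_area_eq)
  next
    show "cyclic_pentagon example_pentagon" "convex_pentagon example_pentagon"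
      by (fact example_pentagon_cyclic example_pentagon_convex)+
    show "poly10_eval D (pent_data example_pentagon) \<noteq> 0"
      using example_pentagon_area_den by (simp add: D)
  qed
qed

end
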